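(* $\mathrm{cov}^{*}(\mathcal{Z})\leq\mathrm{cov}^{*}(\mathrm{tr}(\mathcal{N}))\leq\mathfrak{r}$.
   Context: $\mathcal{Z}$ is the density zero ideal on $\omega$: $A\in\mathcal{Z}$ iff $\lim_{n}|A\cap n|/n=0$. $\mathcal{N}$ is the ideal of Lebesgue null subsets of $2^\omega$, and $\mathrm{tr}(\mathcal{N})$ is the ideal on $2^{<\omega}$ of those $A$ with $\{x\in2^{\omega}:x|_{n}\in A$ for infinitely many $n\}\in\mathcal{N}$. For a tall ideal $\mathcal{J}$ on a countable set $X$, $\mathrm{cov}^{*}(\mathcal{J})=\min\{|\mathcal{F}|:\mathcal{F}\subseteq\mathcal{J}$ and for every infinite $Y\subseteq X$ there is $F\in\mathcal{F}$ with $|F\cap Y|=\omega\}$. $\mathfrak{r}$ is the reaping number. *)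

theory Defs
  imports "HOL-Probability.Probability"
begin

definition card_le :: "'a set \<Rightarrow> 'b set \<Rightarrow> bool" where
  "card_le A B \<longleftrightarrow> (\<exists>f. inj_on f A \<and> f ` A \<subseteq> B)"

definition density_zero_ideal :: "nat set set" where
  "density_zero_ideal = {A. (\<lambda>n. real (card (A \<inter> {..<n})) / real n) \<longlonglongrightarrow> 0}"

definition cantor_measure :: "(nat \<Rightarrow> bool) measure" where
  "cantor_measure = PiM UNIV (\<lambda>_. measure_pmf (bernoulli_pmf (1/2)))"

definition cantor_null :: "(nat \<Rightarrow> bool) set set" where
  "cantor_null = {A. \<exists>B \<in> null_sets cantor_measure. A \<subseteq> B}"

definition restr :: "(nat \<Rightarrow> bool) \<Rightarrow> nat \<Rightarrow> bool list" where
  "restr x n = map x [0..<n]"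

definition trN :: "bool list set set" where
  "trN = {A. {x. infinite {n. restr x n \<in> A}} \<in> cantor_null}"

definition covstar_family :: "'a set set \<Rightarrow> 'a set \<Rightarrow> 'a set set \<Rightarrow> bool" where
  "covstar_family J X F \<longleftrightarrow> F \<subseteq> J \<and>
     (\<forall>Y. Y \<subseteq> X \<and> infinite Y \<longrightarrow> (\<exists>A\<in>F. infinite (A \<inter> Y)))"

definition reaping_family :: "nat set set \<Rightarrow> bool" where
  "reaping_family R \<longleftrightarrow> (\<forall>A\<in>R. infinite A) \<and>
     (\<forall>S. \<exists>A\<in>R. finite (A \<inter> S) \<or> finite (A - S))"

end

theory Submission
  imports Defs "HOL-Library.Equipollence" "HOL-Library.Discrete_Functions"
begin

text \<open>
  If \<open>A \<in> tr(N)\<close>, the points with infinitely many prefixes in \<open>A\<close> form a null set, so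
  the proportion of strings of length \<open>n\<close> that lie in \<open>A\<close> tends to \<open>0\<close>. Reading a string
  \<open>s\<close> as the binary number \<open>1s\<close> sends the level \<open>n\<close> into \<open>[2^n, 2^(n+1))\<close>, hence sends
  \<open>tr(N)\<close> into \<open>Z\<close>; being injective with cofinite range it turns a \<open>cov\<^sup>*\<close> family for
  \<open>tr(N)\<close> into one for \<open>Z\<close>.

  For the second inequality, an infinite \<open>D \<subseteq> \<omega>\<close> determines the set of strings \<open>t\<close>
  which, on the upper half of the elements of \<open>D\<close> below \<open>|t|\<close>, are constant up to some
  threshold and constant after it. The window has about \<open>k/2\<close> elements at stage \<open>k\<close>,
  so the corresponding events in Cantor space are summable and Borel--Cantelli puts this
  set into \<open>tr(N)\<close>. Given an infinite set \<open>Y\<close> of strings, a Koenig argument gives a branch \<open>x\<close>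
  and strings \<open>y\<^sub>j \<in> Y\<close> extending \<open>x|L\<^sub>j\<close> of length \<open>L\<^sub>j\<^sub>+\<^sub>1\<close>. If \<open>A\<^sub>1\<close> in a reaping
  family reaps \<open>x\<close> and \<open>A\<^sub>2\<close> reaps the values of the \<open>y\<^sub>j\<close> read along \<open>A\<^sub>1\<close>, then for
  \<open>D = A\<^sub>1[A\<^sub>2]\<close> almost all \<open>y\<^sub>j\<close> have this shape with threshold \<open>L\<^sub>j\<close>. Reaping
  families are uncountable, so a reaping family \<open>R\<close> has as many members as \<open>R \<times> R\<close>.
\<close>

section \<open>Cantor space\<close>

interpretation coin_flips: product_prob_space "\<lambda>_::nat. measure_pmf (bernoulli_pmf (1/2))" UNIV
  by unfold_locales (simp add: prob_space_measure_pmf)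

interpretation cantor_measure: prob_space cantor_measure
  unfolding cantor_measure_def by (rule coin_flips.P.prob_space_axioms)

lemma space_cantor_measure [simp]: "space cantor_measure = UNIV"
  by (simp add: cantor_measure_def space_PiM)

lemma cylinder_in_sets:
  assumes "finite J"
  shows "{x. \<forall>i\<in>J. x i = v i} \<in> sets cantor_measure"
proof -
  have "{x\<in>space cantor_measure. \<forall>i\<in>J. x i = v i} \<in> sets cantor_measure"
    unfolding cantor_measure_def using assms by measurable
  then show ?thesis
    by simp
qed

lemma measure_cylinder:
  assumes "finite J"
  shows "measure cantor_measure {x. \<forall>i\<in>J. x i = v i} = (1/2) ^ card J"
proof -
  have "{x. \<forall>i\<in>J. x i = v i} =
      {x\<in>space (Pi\<^sub>M UNIV (\<lambda>_. measure_pmf (bernoulli_pmf (1/2)))). \<forall>i\<in>J. x i \<in> {v i}}"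
    by (auto simp: space_PiM)
  then have "emeasure cantor_measure {x. \<forall>i\<in>J. x i = v i} =
      (\<Prod>i\<in>J. emeasure (measure_pmf (bernoulli_pmf (1/2))) {v i})"
    unfolding cantor_measure_def using coin_flips.emeasure_PiM_Collect[of J "\<lambda>i. {v i}"] assms
    by simp
  also have "\<dots> = (\<Prod>i\<in>J. ennreal (1/2))"
    by (intro prod.cong) (auto simp: emeasure_pmf_single split: bool.splits)
  also have "\<dots> = ennreal ((1/2) ^ card J)"
    by (subst prod_ennreal) simp_all
  finally show ?thesis
    by (simp add: measure_def)
qed

lemma length_restr [simp]: "length (restr x n) = n"
  by (simp add: restr_def)

lemma nth_restr [simp]: "i < n \<Longrightarrow> restr x n ! i = x i"
  by (simp add: restr_def)

lemma restr_eq_iff: "length s = n \<Longrightarrow> restr x n = s \<longleftrightarrow> (\<forall>i\<in>{..<n}. x i = s ! i)"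
  by (auto simp: list_eq_iff_nth_eq)

definition level :: "bool list set \<Rightarrow> nat \<Rightarrow> bool list set" where
  "level A n = {s\<in>A. length s = n}"

lemma level_subset_lists: "level A n \<subseteq> {s. set s \<subseteq> UNIV \<and> length s = n}"
  by (auto simp: level_def)

lemma finite_level [simp]: "finite (level A n)"
  by (rule finite_subset[OF level_subset_lists]) (rule finite_lists_length_eq, simp)

lemma card_level_le: "card (level A n) \<le> 2 ^ n"
proof -
  have "card (level A n) \<le> card {s. set s \<subseteq> (UNIV :: bool set) \<and> length s = n}"
    by (rule card_mono[OF _ level_subset_lists]) (rule finite_lists_length_eq, simp)
  then show ?thesis
    using card_lists_length_eq[of "UNIV :: bool set" n] by simp
qed

lemma restr_in_eq_UN_cylinders:
  "{x. restr x n \<in> A} = (\<Union>s\<in>level A n. {x. \<forall>i\<in>{..<n}. x i = s ! i})"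
proof -
  have "restr x n \<in> A \<longleftrightarrow> (\<exists>s\<in>level A n. \<forall>i\<in>{..<n}. x i = s ! i)" for x
  proof
    assume "restr x n \<in> A"
    then show "\<exists>s\<in>level A n. \<forall>i\<in>{..<n}. x i = s ! i"
      by (intro bexI[of _ "restr x n"]) (auto simp: level_def)
  next
    assume "\<exists>s\<in>level A n. \<forall>i\<in>{..<n}. x i = s ! i"
    then obtain s where "s \<in> level A n" "\<forall>i\<in>{..<n}. x i = s ! i"
      by blast
    then show "restr x n \<in> A"
      using restr_eq_iff[of s n x] by (simp add: level_def)
  qed
  then show ?thesis
    by blast
qed

lemma restr_in_sets: "{x. restr x n \<in> A} \<in> sets cantor_measure"
  unfolding restr_in_eq_UN_cylinders by (intro sets.finite_UN finite_level cylinder_in_sets) auto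

lemma measure_restr_in: "measure cantor_measure {x. restr x n \<in> A} = card (level A n) / 2 ^ n"
proof -
  have "s = t" if "s \<in> level A n" "t \<in> level A n"
    and "\<forall>i\<in>{..<n}. x i = s ! i" "\<forall>i\<in>{..<n}. x i = t ! i" for s t x
    using that restr_eq_iff[of s n x] restr_eq_iff[of t n x] by (simp add: level_def)
  then have "disjoint_family_on (\<lambda>s. {x. \<forall>i\<in>{..<n}. x i = s ! i}) (level A n)"
    by (auto simp: disjoint_family_on_def)
  then have "measure cantor_measure {x. restr x n \<in> A} =
      (\<Sum>s\<in>level A n. measure cantor_measure {x. \<forall>i\<in>{..<n}. x i = s ! i})"
    unfolding restr_in_eq_UN_cylinders
    by (intro measure_finite_Union) (auto intro: cylinder_in_sets)
  then show ?thesis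
    by (simp add: measure_cylinder power_one_over)
qed

lemma (in finite_measure) measure_tendsto_0_if_AE_finitely_many:
  assumes sets: "\<And>n. C n \<in> sets M" and AE: "AE x in M. finite {n. x \<in> C n}"
  shows "(\<lambda>n. measure M (C n)) \<longlonglongrightarrow> 0"
proof -
  define U where "U N = (\<Union>n\<in>{N..}. C n)" for N
  have U: "range U \<subseteq> sets M"
    using sets unfolding U_def by (intro image_subsetI sets.countable_UN) simp
  have "decseq U"
    unfolding U_def by (intro decseq_SucI UN_mono) auto
  then have "(\<lambda>N. measure M (U N)) \<longlonglongrightarrow> measure M (\<Inter>N. U N)"
    by (rule finite_Lim_measure_decseq[OF U])
  moreover have "(\<Inter>N. U N) = {x\<in>space M. infinite {n. x \<in> C n}}"
    using sets.sets_into_space[OF sets]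
    by (auto simp: U_def infinite_nat_iff_unbounded_le) blast
  ultimately have U_tendsto: "(\<lambda>N. measure M (U N)) \<longlonglongrightarrow> 0"
    using emeasure_eq_0_AE[of "\<lambda>x. infinite {n. x \<in> C n}"] AE by (simp add: measure_def)
  have C_le_U: "measure M (C N) \<le> measure M (U N)" for N
    using U unfolding U_def by (intro finite_measure_mono) auto
  show ?thesis
    by (rule tendsto_sandwich[where f="\<lambda>_. 0" and h="\<lambda>N. measure M (U N)"])
      (use C_le_U U_tendsto in \<open>auto intro: always_eventually\<close>)
qed

lemma trN_level_density:
  assumes "A \<in> trN"
  shows "(\<lambda>n. real (card (level A n)) / 2 ^ n) \<longlonglongrightarrow> 0"
proof -
  obtain B where "B \<in> null_sets cantor_measure" "{x. infinite {n. restr x n \<in> A}} \<subseteq> B"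
    using assms unfolding trN_def cantor_null_def by blast
  then have "AE x in cantor_measure. finite {n. restr x n \<in> A}"
    by (intro AE_I') auto
  then show ?thesis
    using cantor_measure.measure_tendsto_0_if_AE_finitely_many[OF restr_in_sets]
    by (simp add: measure_restr_in)
qed

section \<open>Coding binary strings by natural numbers\<close>

definition string_code :: "bool list \<Rightarrow> nat" where
  "string_code s = 2 ^ length s + horner_sum of_bool 2 s"

lemma string_code_bounds: "2 ^ length s \<le> string_code s" "string_code s < 2 * 2 ^ length s"
  using horner_sum_of_bool_2_less[of s] by (simp_all add: string_code_def)

lemma floor_log_string_code [simp]: "floor_log (string_code s) = length s"
  using string_code_bounds[of s] by (intro floor_log_eqI) auto

lemma bits_horner_sum: "map (bit (horner_sum of_bool 2 s :: nat)) [0..<length s] = s"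
  by (rule nth_equalityI) (simp_all add: bit_horner_sum_bit_iff)

lemma inj_string_code: "inj string_code"
proof (rule injI)
  fix s t assume eq: "string_code s = string_code t"
  then have "length s = length t"
    by (metis floor_log_string_code)
  with eq have "horner_sum of_bool 2 s = (horner_sum of_bool 2 t :: nat)"
    by (simp add: string_code_def)
  then show "s = t"
    using bits_horner_sum[of s] bits_horner_sum[of t] \<open>length s = length t\<close> by metis
qed

lemma range_string_code: "range string_code = {0<..}"
proof (intro equalityI subsetI)
  fix n :: nat assume "n \<in> {0<..}"
  then have n: "2 ^ floor_log n \<le> n" "n < 2 * 2 ^ floor_log n"
    using floor_log_exp2_le floor_log_exp2_gt by auto
  define s where "s = map (bit (n - 2 ^ floor_log n)) [0..<floor_log n]"
  have "horner_sum of_bool 2 s = n - 2 ^ floor_log n"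
    using n by (simp add: s_def horner_sum_bit_eq_take_bit take_bit_nat_eq_self_iff)
  then have "string_code s = n"
    using n by (simp add: string_code_def s_def)
  then show "n \<in> range string_code"
    by (metis rangeI)
qed (auto simp: string_code_def)

lemma sum_power2_less: "(\<Sum>i<n. (2::real) ^ i) < 2 ^ n"
  by (induction n) simp_all

lemma sum_levels_le:
  fixes a :: "nat \<Rightarrow> real"
  assumes "\<And>L. a L \<le> 2 ^ L" and "\<And>L. L0 \<le> L \<Longrightarrow> a L \<le> \<epsilon> * 2 ^ L" and "0 \<le> \<epsilon>"
  shows "(\<Sum>L\<le>K. a L) \<le> 2 ^ L0 + \<epsilon> * 2 ^ Suc K"
proof -
  have "(\<Sum>L\<le>K. a L) \<le> (\<Sum>L\<le>K. (if L < L0 then 2 ^ L else 0) + \<epsilon> * 2 ^ L)"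
    using assms by (intro sum_mono) (auto simp: not_less intro: add_increasing2)
  also have "\<dots> = (\<Sum>L\<in>{..K} \<inter> {..<L0}. 2 ^ L) + \<epsilon> * (\<Sum>L<Suc K. 2 ^ L)"
    by (simp add: sum.distrib sum.inter_restrict sum_distrib_left lessThan_Suc_atMost)
  also have "\<dots> \<le> (\<Sum>L<L0. 2 ^ L) + \<epsilon> * 2 ^ Suc K"
    using sum_power2_less[of "Suc K"] assms(3)
    by (intro add_mono sum_mono2 mult_left_mono) auto
  also have "\<dots> \<le> 2 ^ L0 + \<epsilon> * 2 ^ Suc K"
    using sum_power2_less[of L0] by simp
  finally show ?thesis .
qed

lemma card_string_code_image_less:
  "card (string_code ` A \<inter> {..<N}) \<le> (\<Sum>L\<le>floor_log N. card (level A L))"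
proof -
  have "string_code ` A \<inter> {..<N} \<subseteq> string_code ` (\<Union>L\<le>floor_log N. level A L)"
    using floor_log_le_iff[of "string_code _" N] by (fastforce simp: level_def)
  then have "card (string_code ` A \<inter> {..<N}) \<le> card (string_code ` (\<Union>L\<le>floor_log N. level A L))"
    by (rule card_mono[rotated]) simp
  also have "\<dots> \<le> card (\<Union>L\<le>floor_log N. level A L)"
    by (rule card_image_le) simp
  also have "\<dots> \<le> (\<Sum>L\<le>floor_log N. card (level A L))"
    by (rule card_UN_le) simp
  finally show ?thesis .
qed

lemma string_code_image_density_zero:
  assumes lim: "(\<lambda>L. real (card (level A L)) / 2 ^ L) \<longlonglongrightarrow> 0"
  shows "string_code ` A \<in> density_zero_ideal"
  unfolding density_zero_ideal_def mem_Collect_eq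
proof (rule LIMSEQ_I)
  fix r :: real assume "0 < r"
  define \<epsilon> where "\<epsilon> = r / 4"
  have "0 < \<epsilon>"
    using \<open>0 < r\<close> by (simp add: \<epsilon>_def)
  then obtain L0 where L0: "\<And>L. L0 \<le> L \<Longrightarrow> real (card (level A L)) / 2 ^ L < \<epsilon>"
    using LIMSEQ_D[OF lim] by fastforce
  obtain N0 :: nat where N0: "2 ^ L0 / \<epsilon> < N0"
    using reals_Archimedean2 by blast
  have "real (card (string_code ` A \<inter> {..<N})) / N < r" if "N0 < N" for N
  proof -
    have "real (card (string_code ` A \<inter> {..<N})) \<le> (\<Sum>L\<le>floor_log N. real (card (level A L)))"
      using card_string_code_image_less[of A N] by (simp flip: of_nat_sum)
    also have "\<dots> \<le> 2 ^ L0 + \<epsilon> * 2 ^ Suc (floor_log N)"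
      using card_level_le L0 \<open>0 < \<epsilon>\<close> by (intro sum_levels_le) (auto simp: less_imp_le field_simps)
    also have "\<dots> \<le> 2 ^ L0 + \<epsilon> * (2 * N)"
      using floor_log_exp2_le[of N] that \<open>0 < \<epsilon>\<close> by simp
    also have "\<dots> < r * N"
    proof -
      have "4 * 2 ^ L0 < r * N0"
        using N0 \<open>0 < r\<close> by (simp add: \<epsilon>_def field_simps)
      moreover have "r * N0 < r * N"
        using that \<open>0 < r\<close> by simp
      moreover have "(0::real) < 2 ^ L0"
        by simp
      ultimately show ?thesis
        unfolding \<epsilon>_def by linarith
    qed
    finally show ?thesis
      using that by (simp add: field_simps)
  qed
  then show "\<exists>N0. \<forall>N\<ge>N0. norm (real (card (string_code ` A \<inter> {..<N})) / N - 0) < r"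
    by (intro exI[of _ "Suc N0"]) (simp add: Suc_le_eq)
qed

lemma card_le_iff_lepoll: "card_le A B \<longleftrightarrow> A \<lesssim> B"
  by (simp add: card_le_def lepoll_def)

theorem covstar_density_zero_le_covstar_trN:
  assumes F: "covstar_family trN UNIV F"
  shows "\<exists>G. covstar_family density_zero_ideal UNIV G \<and> card_le G F"
proof (intro exI conjI)
  let ?G = "(\<lambda>A. string_code ` A) ` F"
  have "?G \<subseteq> density_zero_ideal"
    using F by (auto simp: covstar_family_def intro: string_code_image_density_zero trN_level_density)
  moreover have "\<exists>D\<in>?G. infinite (D \<inter> Y)" if "infinite Y" for Y
  proof -
    have "Y - {0} \<subseteq> string_code ` (string_code -` Y)"
      using range_string_code by auto
    moreover have "infinite (Y - {0})"
      using \<open>infinite Y\<close> by simp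
    ultimately have "infinite (string_code -` Y)"
      using finite_subset finite_imageI by blast
    then obtain A where "A \<in> F" "infinite (A \<inter> string_code -` Y)"
      using F by (auto simp: covstar_family_def)
    then have "infinite (string_code ` (A \<inter> string_code -` Y))"
      using finite_imageD inj_on_subset[OF inj_string_code] by blast
    then have "infinite (string_code ` A \<inter> Y)"
      by (rule infinite_super[rotated]) auto
    then show ?thesis
      using \<open>A \<in> F\<close> by blast
  qed
  ultimately show "covstar_family density_zero_ideal UNIV ?G"
    by (simp add: covstar_family_def)
  show "card_le ?G F"
    by (simp add: card_le_iff_lepoll image_lepoll)
qed

section \<open>Reaping families\<close>

lemma strict_mono_selection:
  fixes A :: "nat \<Rightarrow> nat set"
  assumes "\<And>n. infinite (A n)"
  shows "\<exists>s. strict_mono s \<and> (\<forall>n. s n \<in> A n)"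
proof -
  have "\<exists>s. \<forall>n. s n \<in> A n \<and> s n < s (Suc n)"
  proof (rule dependent_nat_choice)
    show "\<exists>x. x \<in> A 0"
      using assms[of 0] by (metis finite.emptyI ex_in_conv)
    show "\<exists>y. y \<in> A (Suc n) \<and> x < y" for x n :: nat
      using assms[of "Suc n"] unfolding infinite_nat_iff_unbounded by blast
  qed
  then show ?thesis
    by (metis strict_monoI_Suc)
qed

lemma countable_family_splittable:
  assumes "countable \<A>" and "\<And>A. A \<in> \<A> \<Longrightarrow> infinite (A :: nat set)"
  shows "\<exists>S. \<forall>A\<in>\<A>. infinite (A \<inter> S) \<and> infinite (A - S)"
proof (cases "\<A> = {}")
  case False
  \<comment> \<open>Every member of \<open>\<A>\<close> is \<open>B q\<close> for infinitely many even and infinitely many odd \<open>q\<close>.\<close>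
  define B where "B q = from_nat_into \<A> (fst (prod_decode (q div 2)))" for q
  have "infinite (B q)" for q
    using assms(2) from_nat_into[OF False] by (simp add: B_def)
  then obtain s where s: "strict_mono s" "\<And>q. s q \<in> B q"
    using strict_mono_selection[of B] by blast
  define S where "S = s ` {q. even q}"
  have "infinite (A \<inter> S) \<and> infinite (A - S)" if A: "A \<in> \<A>" for A
  proof -
    obtain i where i: "from_nat_into \<A> i = A"
      using from_nat_into_surj[OF assms(1) A] by blast
    define q where "q j = 2 * prod_encode (i, j)" for j
    have inj: "inj q" "inj (\<lambda>j. Suc (q j))" "inj s"
      using s(1) by (auto simp: q_def inj_def prod_encode_eq strict_mono_eq)
    have "s (q j) \<in> A" "s (Suc (q j)) \<in> A" for j
      using s(2)[of "q j"] s(2)[of "Suc (q j)"] by (simp_all add: B_def q_def i)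
    then have "range (s \<circ> q) \<subseteq> A \<inter> S" "range (s \<circ> (\<lambda>j. Suc (q j))) \<subseteq> A - S"
      using inj(3) by (auto simp: q_def S_def inj_eq)
    moreover have "infinite (range (s \<circ> q))" "infinite (range (s \<circ> (\<lambda>j. Suc (q j))))"
      using inj by (intro range_inj_infinite inj_compose; simp)+
    ultimately show ?thesis
      using infinite_super by blast
  qed
  then show ?thesis
    by blast
qed simp

lemma reaping_family_uncountable: "reaping_family R \<Longrightarrow> uncountable R"
  using countable_family_splittable[of R] by (auto simp: reaping_family_def)

lemma reaping_family_homogeneous:
  fixes c :: "nat \<Rightarrow> bool"
  assumes "reaping_family R"
  shows "\<exists>A\<in>R. \<exists>b. finite {p\<in>A. c p \<noteq> b}"
proof -
  obtain A where "A \<in> R" "finite (A \<inter> {p. c p}) \<or> finite (A - {p. c p})"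
    using assms by (auto simp: reaping_family_def)
  moreover have "{p\<in>A. c p \<noteq> False} = A \<inter> {p. c p}" "{p\<in>A. c p \<noteq> True} = A - {p. c p}"
    by auto
  ultimately have "A \<in> R" "finite {p\<in>A. c p \<noteq> False} \<or> finite {p\<in>A. c p \<noteq> True}"
    by simp_all
  then show ?thesis
    by blast
qed

section \<open>Branches through infinite sets of strings\<close>

lemma infinite_extensions_step:
  fixes Y :: "'a::finite list set"
  assumes "infinite {y\<in>Y. take n y = s}"
  shows "\<exists>b. infinite {y\<in>Y. take (Suc n) y = s @ [b]}"
proof -
  have "y = s \<or> take (Suc n) y = s @ [y ! n]" if "take n y = s" for y
    using that by (cases "n < length y") (auto simp: take_Suc_conv_app_nth)
  then have "{y\<in>Y. take n y = s} \<subseteq> {s} \<union> (\<Union>b. {y\<in>Y. take (Suc n) y = s @ [b]})"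
    by blast
  then have "infinite ({s} \<union> (\<Union>b. {y\<in>Y. take (Suc n) y = s @ [b]}))"
    using assms infinite_super by blast
  moreover have "finite (\<Union>b. {y\<in>Y. take (Suc n) y = s @ [b]})"
    if "\<forall>b. finite {y\<in>Y. take (Suc n) y = s @ [b]}"
    using that by (intro finite_UN_I) auto
  ultimately show ?thesis
    by auto
qed

lemma infinite_strings_branch:
  fixes Y :: "bool list set"
  assumes "infinite Y"
  shows "\<exists>x. \<forall>m. infinite {y\<in>Y. take m y = restr x m}"
proof -
  let ?P = "\<lambda>n s. length s = n \<and> infinite {y\<in>Y. take n y = s}"
  have "\<exists>f. \<forall>n. ?P n (f n) \<and> (\<exists>b. f (Suc n) = f n @ [b])"
  proof (rule dependent_nat_choice)
    show "\<exists>s. ?P 0 s"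
      using assms by simp
    show "\<exists>t. ?P (Suc n) t \<and> (\<exists>b. t = s @ [b])" if s: "?P n s" for n s
    proof -
      obtain b where "infinite {y\<in>Y. take (Suc n) y = s @ [b]}"
        using infinite_extensions_step[of Y n s] s by blast
      then show ?thesis
        using s by (intro exI[of _ "s @ [b]"]) auto
    qed
  qed
  then obtain f where f: "\<And>n. ?P n (f n)" "\<And>n. \<exists>b. f (Suc n) = f n @ [b]"
    by blast
  define x where "x m = f (Suc m) ! m" for m
  have "restr x m = f m" for m
  proof (induction m)
    case 0
    then show ?case
      using f(1)[of 0] by (simp add: restr_def)
  next
    case (Suc m)
    obtain b where "f (Suc m) = f m @ [b]"
      using f(2) by blast
    then show ?case
      using Suc f(1)[of m] by (simp add: restr_def x_def nth_append)
  qed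
  then show ?thesis
    using f(1) by (intro exI[of _ x]) simp
qed

lemma branch_approximation:
  fixes Y :: "bool list set"
  assumes "infinite Y"
  shows "\<exists>x y. \<forall>j. y j \<in> Y \<and> length (y j) < length (y (Suc j))
    \<and> take (length (y j)) (y (Suc j)) = restr x (length (y j))"
proof -
  obtain x where x: "\<And>m. infinite {y\<in>Y. take m y = restr x m}"
    using infinite_strings_branch[OF assms] by blast
  have extension: "\<exists>y'. y' \<in> Y \<and> m < length y' \<and> take m y' = restr x m" for m
  proof -
    obtain y' where "y' \<in> {y\<in>Y. take m y = restr x m} - {restr x m}"
      using infinite_imp_nonempty[OF infinite_remove[OF x[of m]]] by blast
    then show ?thesis
      by (cases "m < length y'") auto
  qed
  have "\<exists>y. \<forall>j. y j \<in> Y \<and> (length (y j) < length (y (Suc j))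
      \<and> take (length (y j)) (y (Suc j)) = restr x (length (y j)))"
    by (rule dependent_nat_choice[where P="\<lambda>_ y. y \<in> Y"]) (use extension in blast)+
  then show ?thesis
    by blast
qed

section \<open>Strings following a step pattern along a set\<close>

definition window :: "nat set \<Rightarrow> nat \<Rightarrow> nat set" where
  "window D k = enumerate D ` {k div 2..<k}"

definition step_pattern :: "bool \<Rightarrow> bool \<Rightarrow> nat \<Rightarrow> nat \<Rightarrow> bool" where
  "step_pattern b b' c p = (if p < c then b else b')"

definition pattern_event :: "nat set \<Rightarrow> nat \<Rightarrow> (nat \<Rightarrow> bool) set" where
  "pattern_event D k = {x. \<exists>b b' c. \<forall>p\<in>window D k. x p = step_pattern b b' c p}"

text \<open>Here \<open>k\<close> is the number of elements of \<open>D\<close> below \<open>length t\<close>.\<close>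

definition pattern_strings :: "nat set \<Rightarrow> bool list set" where
  "pattern_strings D = {t. \<exists>k. (\<forall>i<k. enumerate D i < length t) \<and> length t \<le> enumerate D k \<and>
      (\<exists>b b' c. \<forall>p\<in>window D k. t ! p = step_pattern b b' c p)}"

lemma finite_window [simp]: "finite (window D k)"
  by (simp add: window_def)

lemma card_window: "infinite D \<Longrightarrow> card (window D k) = k - k div 2"
  unfolding window_def by (subst card_image) (auto intro: inj_on_subset[OF inj_enumerate])

lemma window_less_enumerate: "infinite D \<Longrightarrow> p \<in> window D k \<Longrightarrow> p < enumerate D k"
  by (auto simp: window_def enumerate_mono_iff)

lemma threshold_normal_form:
  fixes W :: "nat set"
  assumes "finite W" and "\<And>p. p \<in> W \<Longrightarrow> p < u"
  shows "\<exists>c'\<in>insert u W. \<forall>p\<in>W. p < c \<longleftrightarrow> p < c'"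
proof (cases "\<exists>p\<in>W. c \<le> p")
  case True
  define c' where "c' = Min {p\<in>W. c \<le> p}"
  have "c' \<in> {p\<in>W. c \<le> p}"
    unfolding c'_def using True assms(1) by (intro Min_in) auto
  then have c': "c' \<in> W" "c \<le> c'"
    by simp_all
  have c'_le: "c' \<le> p" if "p \<in> W" "c \<le> p" for p
    unfolding c'_def using that assms(1) by (intro Min_le) auto
  have "p < c \<longleftrightarrow> p < c'" if "p \<in> W" for p
    using c'(2) c'_le[OF that] by (cases "c \<le> p") auto
  then show ?thesis
    using c'(1) by blast
next
  case False
  then show ?thesis
    using assms(2) by (intro bexI[of _ u]) (auto simp: not_le)
qed

lemma pattern_event_eq_UN:
  assumes "infinite D"
  shows "pattern_event D k = (\<Union>(b, b', c)\<in>UNIV \<times> UNIV \<times> insert (enumerate D k) (window D k).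
    {x. \<forall>p\<in>window D k. x p = step_pattern b b' c p})"
proof (intro equalityI subsetI)
  fix x assume "x \<in> pattern_event D k"
  then obtain b b' c where x: "\<forall>p\<in>window D k. x p = step_pattern b b' c p"
    by (auto simp: pattern_event_def)
  obtain c' where "c' \<in> insert (enumerate D k) (window D k)"
    and "\<forall>p\<in>window D k. p < c \<longleftrightarrow> p < c'"
    using threshold_normal_form[of "window D k" "enumerate D k" c]
      window_less_enumerate[OF assms] by auto
  then show "x \<in> (\<Union>(b, b', c)\<in>UNIV \<times> UNIV \<times> insert (enumerate D k) (window D k).
      {x. \<forall>p\<in>window D k. x p = step_pattern b b' c p})"
    using x by (intro UN_I[of "(b, b', c')"]) (auto simp: step_pattern_def)
qed (auto simp: pattern_event_def)

lemma Suc_le_two_mult_three_halves_power: "real (Suc w) \<le> 2 * (3/2) ^ w"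
proof (induction w)
  case (Suc w)
  show ?case
  proof (cases w)
    case (Suc w')
    have "real (Suc (Suc w)) \<le> 3/2 * real (Suc w)"
      using Suc by simp
    also have "\<dots> \<le> 2 * (3/2) ^ Suc w"
      using Suc.IH by simp
    finally show ?thesis .
  qed simp
qed simp

lemma measure_pattern_event:
  assumes "infinite D"
  shows "measure cantor_measure (pattern_event D k) \<le> 8 * (9/10) ^ k"
proof -
  define W where "W = window D k"
  define w where "w = k - k div 2"
  define I where "I = (UNIV :: bool set) \<times> (UNIV :: bool set) \<times> insert (enumerate D k) W"
  define cyl where "cyl = (\<lambda>(b, b', c). {x. \<forall>p\<in>W. x p = step_pattern b b' c p})"
  have card_W: "card W = w"
    using card_window[OF assms] by (simp add: W_def w_def)
  have card_I: "card I \<le> 4 * Suc w"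
    using card_W card_insert_le_m1[of "Suc w" W]
    by (simp add: I_def card_cartesian_product card_insert_if W_def)
  have "measure cantor_measure (pattern_event D k) \<le> (\<Sum>i\<in>I. measure cantor_measure (cyl i))"
    unfolding pattern_event_eq_UN[OF assms] I_def W_def cyl_def
    by (rule measure_UNION_le) (auto intro: cylinder_in_sets)
  also have "\<dots> = card I * (1/2) ^ w"
    using card_W by (simp add: cyl_def measure_cylinder W_def split_def)
  also have "\<dots> \<le> 4 * (2 * (3/2) ^ w) * (1/2) ^ w"
    using card_I Suc_le_two_mult_three_halves_power[of w] by (intro mult_right_mono) simp_all
  also have "\<dots> = 8 * (3/4) ^ w"
    by (simp add: power_mult_distrib[symmetric])
  also have "\<dots> \<le> 8 * (9/10) ^ (2 * w)"
    unfolding power_mult by (intro mult_left_mono power_mono) (simp_all add: power2_eq_square)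
  also have "\<dots> \<le> 8 * (9/10) ^ k"
    unfolding w_def by (intro mult_left_mono power_decreasing) auto
  finally show ?thesis .
qed

lemma pattern_event_if_restr_in_pattern_strings:
  assumes "restr x n \<in> pattern_strings D"
  shows "\<exists>k. n \<le> enumerate D k \<and> x \<in> pattern_event D k"
proof -
  obtain k b b' c where k: "\<forall>i<k. enumerate D i < n" "n \<le> enumerate D k"
    and pattern: "\<forall>p\<in>window D k. restr x n ! p = step_pattern b b' c p"
    using assms unfolding pattern_strings_def mem_Collect_eq length_restr by blast
  have "p < n" if "p \<in> window D k" for p
    using that k(1) by (auto simp: window_def)
  then have "x \<in> pattern_event D k"
    using pattern unfolding pattern_event_def by auto
  then show ?thesis
    using k(2) by blast
qed

lemma pattern_strings_in_trN:
  assumes D: "infinite D"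
  shows "pattern_strings D \<in> trN"
proof -
  have null: "limsup (pattern_event D) \<in> null_sets cantor_measure"
  proof (rule borel_cantelli_limsup1)
    show "pattern_event D k \<in> sets cantor_measure" for k
      unfolding pattern_event_eq_UN[OF D] split_beta
      by (intro sets.finite_UN ballI cylinder_in_sets) simp_all
    show "summable (\<lambda>k. measure cantor_measure (pattern_event D k))"
    proof (rule summable_comparison_test)
      show "\<exists>N. \<forall>k\<ge>N. norm (measure cantor_measure (pattern_event D k)) \<le> 8 * (9/10) ^ k"
        using measure_pattern_event[OF D] by simp
      show "summable (\<lambda>k. 8 * (9/10 :: real) ^ k)"
        by (rule summable_mult) (simp add: summable_geometric)
    qed
    show "emeasure cantor_measure (pattern_event D k) < \<infinity>" for k
      by (simp add: less_top[symmetric])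
  qed
  have "{x. infinite {n. restr x n \<in> pattern_strings D}} \<subseteq> limsup (pattern_event D)"
  proof (intro subsetI, unfold mem_Collect_eq)
    fix x assume inf: "infinite {n. restr x n \<in> pattern_strings D}"
    have "\<exists>k\<ge>N. x \<in> pattern_event D k" for N
    proof -
      obtain n where n: "enumerate D N < n" "restr x n \<in> pattern_strings D"
        using inf unfolding infinite_nat_iff_unbounded by blast
      then obtain k where "n \<le> enumerate D k" "x \<in> pattern_event D k"
        using pattern_event_if_restr_in_pattern_strings by blast
      then show ?thesis
        using n(1) enumerate_mono_iff[OF D, of N k] by (intro exI[of _ k]) auto
    qed
    then show "x \<in> limsup (pattern_event D)"
      by (auto simp: limsup_INF_SUP)
  qed
  then show ?thesis
    using null unfolding trN_def cantor_null_def by blast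
qed

lemma pattern_stringsI:
  assumes D: "infinite D" and long: "enumerate D (2 * M) < length t"
    and agree: "\<And>p. p \<in> D \<Longrightarrow> M \<le> p \<Longrightarrow> p < length t \<Longrightarrow> t ! p = step_pattern b b' c p"
  shows "t \<in> pattern_strings D"
proof -
  define k where "k = (LEAST k. length t \<le> enumerate D k)"
  have "length t \<le> enumerate D (length t)"
    by (rule le_enumerate[OF D])
  then have k: "length t \<le> enumerate D k"
    unfolding k_def by (rule LeastI)
  have below: "enumerate D i < length t" if "i < k" for i
    using not_less_Least[OF that[unfolded k_def]] by simp
  have "2 * M < k"
    using long k enumerate_mono_iff[OF D, of "2 * M" k] by simp
  have "t ! p = step_pattern b b' c p" if p: "p \<in> window D k" for p
  proof -
    obtain i where i: "k div 2 \<le> i" "i < k" "p = enumerate D i"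
      using p by (auto simp: window_def)
    have "p \<in> D"
      using enumerate_in_set[OF D] i(3) by simp
    moreover have "M \<le> p"
      using i le_enumerate[OF D, of i] \<open>2 * M < k\<close> by linarith
    moreover have "p < length t"
      using below i by simp
    ultimately show ?thesis
      by (rule agree)
  qed
  then show ?thesis
    unfolding pattern_strings_def using below k by blast
qed

lemma infinite_enumerate_image: "infinite A \<Longrightarrow> infinite B \<Longrightarrow> infinite (enumerate A ` B)"
  using finite_imageD inj_on_subset[OF inj_enumerate] by blast

lemma reaping_family_nested_homogeneous:
  fixes x z :: "nat \<Rightarrow> bool"
  assumes R: "reaping_family R"
  shows "\<exists>A1\<in>R. \<exists>A2\<in>R. \<exists>b b' M. \<forall>p\<in>enumerate A1 ` A2. M \<le> p \<longrightarrow> x p = b \<and> z p = b'"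
proof -
  obtain A1 b where A1: "A1 \<in> R" "finite {p\<in>A1. x p \<noteq> b}"
    using reaping_family_homogeneous[OF R] by blast
  obtain A2 b' where A2: "A2 \<in> R" "finite {n\<in>A2. z (enumerate A1 n) \<noteq> b'}"
    using reaping_family_homogeneous[OF R, of "z \<circ> enumerate A1"] by auto
  have "infinite A1"
    using R A1(1) by (auto simp: reaping_family_def)
  then have "{p\<in>enumerate A1 ` A2. x p \<noteq> b \<or> z p \<noteq> b'} \<subseteq>
      {p\<in>A1. x p \<noteq> b} \<union> enumerate A1 ` {n\<in>A2. z (enumerate A1 n) \<noteq> b'}"
    using enumerate_in_set[of A1] by auto
  then have "finite {p\<in>enumerate A1 ` A2. x p \<noteq> b \<or> z p \<noteq> b'}"
    using A1(2) A2(2) finite_subset by blast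
  then obtain M where "{p\<in>enumerate A1 ` A2. x p \<noteq> b \<or> z p \<noteq> b'} \<subseteq> {..<M}"
    unfolding finite_nat_iff_bounded by blast
  then have "\<forall>p\<in>enumerate A1 ` A2. M \<le> p \<longrightarrow> x p = b \<and> z p = b'"
    using leD by blast
  then show ?thesis
    using A1(1) A2(1) by blast
qed

lemma strict_mono_block_index:
  fixes L :: "nat \<Rightarrow> nat"
  assumes L: "strict_mono L" and "L j \<le> p" and "p < L (Suc j)"
  shows "(LEAST j. p < L (Suc j)) = j"
proof (rule Least_equality)
  show "j \<le> j'" if "p < L (Suc j')" for j'
  proof (rule ccontr)
    assume "\<not> j \<le> j'"
    then have "L (Suc j') \<le> L j"
      using L by (simp add: strict_mono_less_eq)
    then show False
      using assms(2) that by simp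
  qed
qed (fact assms(3))

lemma reaping_family_catches:
  assumes R: "reaping_family R" and Y: "infinite Y"
  shows "\<exists>A1\<in>R. \<exists>A2\<in>R. infinite (pattern_strings (enumerate A1 ` A2) \<inter> Y)"
proof -
  obtain x y where y: "\<And>j. y j \<in> Y" "\<And>j. length (y j) < length (y (Suc j))"
    "\<And>j. take (length (y j)) (y (Suc j)) = restr x (length (y j))"
    using branch_approximation[OF Y] by blast
  define L where "L j = length (y j)" for j
  have L: "strict_mono L"
    unfolding L_def using y(2) by (rule strict_monoI_Suc)
  \<comment> \<open>\<open>y (Suc j)\<close> agrees with \<open>x\<close> below \<open>L j\<close> and with \<open>z\<close> from \<open>L j\<close> to its end.\<close>
  define z where "z p = y (Suc (LEAST j. p < L (Suc j))) ! p" for p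
  obtain A1 A2 b b' M where A: "A1 \<in> R" "A2 \<in> R"
    and homogeneous: "\<forall>p\<in>enumerate A1 ` A2. M \<le> p \<longrightarrow> x p = b \<and> z p = b'"
    using reaping_family_nested_homogeneous[OF R, of x z] by (elim bexE exE) (rule that)
  define D where "D = enumerate A1 ` A2"
  have M: "x p = b \<and> z p = b'" if "p \<in> D" "M \<le> p" for p
    using homogeneous that unfolding D_def by blast
  have D: "infinite D"
    using R A unfolding D_def reaping_family_def by (intro infinite_enumerate_image) simp_all
  have "y (Suc j) \<in> pattern_strings D" if "enumerate D (2 * M) \<le> j" for j
  proof (rule pattern_stringsI[OF D, of M _ b b' "L j"])
    show "enumerate D (2 * M) < length (y (Suc j))"
      using that strict_mono_imp_increasing[OF L, of "Suc j"] by (simp add: L_def)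
    fix p assume p: "p \<in> D" "M \<le> p" "p < length (y (Suc j))"
    show "y (Suc j) ! p = step_pattern b b' (L j) p"
    proof (cases "p < L j")
      case True
      then have "y (Suc j) ! p = x p"
        using nth_take[OF True, of "y (Suc j)"] y(3)[of j] by (simp add: L_def)
      then show ?thesis
        using M[OF p(1,2)] True by (simp add: step_pattern_def)
    next
      case False
      then have "(LEAST j. p < L (Suc j)) = j"
        using p(3) by (intro strict_mono_block_index[OF L]) (simp_all add: L_def)
      then have "y (Suc j) ! p = z p"
        by (simp add: z_def)
      then show ?thesis
        using M[OF p(1,2)] False by (simp add: step_pattern_def)
    qed
  qed
  then have "(\<lambda>j. y (Suc j)) ` {enumerate D (2 * M)..} \<subseteq> pattern_strings D \<inter> Y"
    using y(1) by auto
  moreover have "inj (\<lambda>j. y (Suc j))"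
    using L by (intro inj_on_imageI2[of length] strict_mono_imp_inj_on)
      (simp add: L_def strict_mono_def comp_def)
  then have "infinite ((\<lambda>j. y (Suc j)) ` {enumerate D (2 * M)..})"
    using finite_imageD inj_on_subset infinite_Ici by blast
  ultimately show ?thesis
    using A infinite_super unfolding D_def by blast
qed

lemma infinite_times_self_eqpoll: "infinite A \<Longrightarrow> A \<times> A \<approx> A"
  by (simp add: eqpoll_iff_card_of_ordIso card_of_Times_same_infinite)

theorem covstar_trN_le_reaping:
  assumes R: "reaping_family R"
  shows "\<exists>F. covstar_family trN UNIV F \<and> card_le F R"
proof (intro exI conjI)
  let ?F = "(\<lambda>(A1, A2). pattern_strings (enumerate A1 ` A2)) ` (R \<times> R)"
  have "pattern_strings (enumerate A1 ` A2) \<in> trN" if "A1 \<in> R" "A2 \<in> R" for A1 A2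
    using R that by (intro pattern_strings_in_trN infinite_enumerate_image)
      (simp_all add: reaping_family_def)
  then have "?F \<subseteq> trN"
    by auto
  moreover have "\<exists>B\<in>?F. infinite (B \<inter> Y)" if "infinite Y" for Y
  proof -
    obtain A1 A2 where "A1 \<in> R" "A2 \<in> R" "infinite (pattern_strings (enumerate A1 ` A2) \<inter> Y)"
      using reaping_family_catches[OF R \<open>infinite Y\<close>] by blast
    then show ?thesis
      by (intro bexI[of _ "pattern_strings (enumerate A1 ` A2)"] rev_image_eqI[of "(A1, A2)"]) simp_all
  qed
  ultimately show "covstar_family trN UNIV ?F"
    by (simp add: covstar_family_def)
  have "?F \<lesssim> R \<times> R"
    by (rule image_lepoll)
  also have "R \<times> R \<approx> R"
    using reaping_family_uncountable[OF R] countable_finite infinite_times_self_eqpoll by blast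
  finally show "card_le ?F R"
    by (simp add: card_le_iff_lepoll)
qed

theorem mainTheorem8:
  shows "(\<forall>F. covstar_family trN UNIV F \<longrightarrow>
            (\<exists>G. covstar_family density_zero_ideal UNIV G \<and> card_le G F))
       \<and> (\<forall>R. reaping_family R \<longrightarrow>
            (\<exists>F. covstar_family trN UNIV F \<and> card_le F R))"
  using covstar_density_zero_le_covstar_trN covstar_trN_le_reaping by blast

end
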